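(* Let $A(z,\lambda)\in\mathfrak{gl}_2(\mathbb{C}((z))[[\lambda]])$ and $R(z,\lambda)\in\mathrm{GL}_2(\mathbb{C}((z))[[\lambda]])$ satisfy: (1) $A$ is diagonal; (2) $R(z,0)\in\mathfrak{gl}_2(\mathbb{C}[[z]])$; (3) $\det R(z,0)\in\mathbb{C}[[z]]$ has a first-order zero at $z=0$; (4) $\tilde A:=R^{-1}AR+\lambda R^{-1}\frac{dR}{dz}\in\mathfrak{gl}_2(\mathbb{C}[[z,\lambda]])$. Then $\operatorname{res}_{z=0}\operatorname{tr}A(z,\lambda)=-\lambda$.
   Context: Residues of elements of $\mathbb{C}((z))[[\lambda]]$ are taken coefficientwise in $\lambda$. *)

theory Defs
  imports "HOL-Analysis.Analysis" "HOL-Computational_Algebra.Formal_Laurent_Series"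
begin

text \<open>Elements of C((z))[[lambda]] are modelled as complex fls fps:
  formal power series in lambda whose coefficients are formal Laurent series in z.\<close>

type_synonym LS = "complex fls fps"

definition dz :: "LS \<Rightarrow> LS" where
  "dz f = Abs_fps (\<lambda>k. fls_deriv (f $ k))"

definition dz_mat :: "LS^2^2 \<Rightarrow> LS^2^2" where
  "dz_mat M = (\<chi> i j. dz (M $ i $ j))"

definition res_z :: "LS \<Rightarrow> LS" where
  "res_z f = Abs_fps (\<lambda>k. fps_to_fls (fps_const (fls_residue (f $ k))))"

definition at_lambda0 :: "LS^2^2 \<Rightarrow> complex fls^2^2" where
  "at_lambda0 M = (\<chi> i j. (M $ i $ j) $ 0)"

definition is_pow_series :: "complex fls \<Rightarrow> bool" where
  "is_pow_series f \<longleftrightarrow> f \<in> range fps_to_fls"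

definition in_Czl :: "LS \<Rightarrow> bool" where
  "in_Czl f \<longleftrightarrow> (\<forall>k. is_pow_series (f $ k))"

end

theory Submission
  imports Defs
begin

text \<open>Since \<open>R\<^sup>-\<^sup>1 A R\<close> has the same trace as \<open>A\<close> and, by Jacobi's formula,
  \<open>tr (R\<^sup>-\<^sup>1 dR/dz) = D'/D\<close> for \<open>D = det R\<close>, the trace of the regular matrix \<open>\<tilde>A\<close> is
  \<open>tr A + \<lambda> D'/D\<close>; it has no residue, so \<open>res tr A = -\<lambda> res (D'/D)\<close>.
  The \<open>\<lambda>\<^sup>0\<close>-coefficient of \<open>D'/D\<close> is the logarithmic derivative of \<open>D(z,0)\<close>, whose residue
  is its order 1. The higher coefficients have no residue, because
  \<open>\<partial>\<^sub>\<lambda> (\<partial>\<^sub>z D / D) = \<partial>\<^sub>z (\<partial>\<^sub>\<lambda> D / D)\<close> is a \<open>z\<close>-derivative.\<close>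

lemma derivation_of_inverse:
  fixes d :: "'a::comm_ring_1 \<Rightarrow> 'a"
  assumes leibniz: "\<And>f g. d (f * g) = f * d g + d f * g"
    and inverse: "E * D = 1"
  shows "d E = - (d D * E * E)"
proof -
  have "d 1 = 0"
    using leibniz[of 1 1] by simp
  then have "0 = d (E * D)"
    using inverse by simp
  also have "\<dots> = E * d D + d E * D"
    by (rule leibniz)
  finally have "0 = E * (E * d D + d E * D)"
    by simp
  also have "\<dots> = E * E * d D + d E * (E * D)"
    by (simp add: algebra_simps)
  finally have "E * E * d D + d E = 0"
    using inverse by simp
  then show ?thesis
    by (simp add: ac_simps eq_neg_iff_add_eq_0)
qed

lemma derivation_diff:
  fixes d :: "'a::ab_group_add \<Rightarrow> 'b::ab_group_add"
  assumes additive: "\<And>f g. d (f + g) = d f + d g"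
  shows "d (f - g) = d f - d g"
  using additive[of "f - g" g] by (simp add: eq_diff_eq)

lemma dz_nth [simp]: "dz f $ k = fls_deriv (f $ k)"
  by (simp add: dz_def)

lemma dz_add: "dz (f + g) = dz f + dz g"
  by (rule fps_ext) simp

lemma dz_mult: "dz (f * g) = f * dz g + dz f * g"
  by (rule fps_ext) (simp add: fps_mult_nth fls_deriv_sum sum.distrib)

lemma dz_fps_deriv: "dz (fps_deriv f) = fps_deriv (dz f)"
  by (rule fps_ext) simp

lemma res_z_nth [simp]: "res_z f $ k = fls_const (fls_residue (f $ k))"
  by (simp add: res_z_def)

lemma res_z_add: "res_z (f + g) = res_z f + res_z g"
  by (rule fps_ext) (simp add: fls_eq_iff)

lemma res_z_fps_X_mult: "res_z (fps_X * f) = fps_X * res_z f"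
  by (rule fps_ext) (simp add: fps_X_mult_nth)

lemma res_z_dz: "res_z (dz f) = 0"
  by (rule fps_ext) simp

lemma in_Czl_add: "in_Czl f \<Longrightarrow> in_Czl g \<Longrightarrow> in_Czl (f + g)"
  unfolding in_Czl_def is_pow_series_def
  by (metis fps_add_nth fps_to_fls_plus rangeE rangeI)

lemma res_z_eq_0_if_in_Czl: "in_Czl f \<Longrightarrow> res_z f = 0"
proof (rule fps_ext)
  fix k
  assume "in_Czl f"
  then obtain g where "f $ k = fps_to_fls g"
    unfolding in_Czl_def is_pow_series_def by blast
  then show "res_z f $ k = 0 $ k"
    by (simp add: fls_residue_power_series)
qed

lemma res_z_log_deriv:
  assumes inverse: "E * D = 1"
  shows "res_z (E * dz D) = of_int (fls_subdegree (D $ 0))"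
proof -
  define F where "F = E * dz D"
  have lambda_deriv: "fps_deriv F = dz (E * fps_deriv D)"
    using derivation_of_inverse[OF dz_mult inverse]
      derivation_of_inverse[OF fps_deriv_mult inverse]
    unfolding F_def by (simp add: dz_mult dz_fps_deriv algebra_simps)
  have higher: "fls_residue (F $ Suc k) = 0" for k
  proof -
    have "res_z (fps_deriv F) $ k = 0"
      by (simp only: lambda_deriv res_z_dz) simp
    then have "fls_residue (of_int (int (Suc k)) * F $ Suc k) = 0"
      by simp
    then have "of_int (int (Suc k)) * fls_residue (F $ Suc k) = 0"
      by (simp only: fls_residue_of_int_times)
    then show ?thesis
      by (metis mult_eq_0_iff of_int_of_nat_eq of_nat_eq_0_iff nat.distinct(1))
  qed
  have "E $ 0 * D $ 0 = 1"
    using inverse by (metis fps_mult_nth_0 fps_one_nth)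
  then have "E $ 0 = inverse (D $ 0)"
    by (metis inverse_unique mult.commute)
  then have lowest: "fls_residue (F $ 0) = of_int (fls_subdegree (D $ 0))"
    unfolding F_def using fls_residue_deriv_times_inverse_eq_subdegree(2)[of "D $ 0"] by simp
  show ?thesis
  proof (rule fps_ext)
    fix k
    show "res_z (E * dz D) $ k = of_int (fls_subdegree (D $ 0)) $ k"
      using higher lowest unfolding F_def[symmetric]
      by (cases k) (auto simp: fps_of_int fls_of_int)
  qed
qed

lemma trace_2: "trace (M :: 'a::semiring_1^2^2) = M$1$1 + M$2$2"
  by (simp add: trace_def sum_2)

lemma matrix_matrix_mult_2_nth:
  "((M :: 'a::semiring_1^2^2) ** N) $ i $ j = M$i$1 * N$1$j + M$i$2 * N$2$j"
  by (simp add: matrix_matrix_mult_def sum_2)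

lemma trace_conjugate:
  fixes A R Rinv :: "'a::comm_semiring_1^'n^'n"
  assumes "R ** Rinv = mat 1"
  shows "trace (Rinv ** A ** R) = trace A"
  by (metis trace_mul_sym matrix_mul_assoc assms matrix_mul_lid)

lemma trace_mat_mult: "trace (mat c ** M) = c * trace (M :: 'a::comm_semiring_1^'n^'n)"
  by (simp add: trace_def matrix_matrix_mult_def mat_def if_distrib [of "\<lambda>x. x * _"]
      sum_distrib_left cong: if_cong)

lemma cramer_row_2:
  fixes a b c d x y p q E :: "'a::comm_ring_1"
  assumes "x * a + y * c = p" "x * b + y * d = q" and "E * (a * d - b * c) = 1"
  shows "x = E * (d * p - c * q)" "y = E * (a * q - b * p)"
proof -
  have "x * (E * (a * d - b * c)) = E * (d * (x * a + y * c) - c * (x * b + y * d))"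
    by (simp add: algebra_simps)
  then show "x = E * (d * p - c * q)"
    using assms by simp
  have "y * (E * (a * d - b * c)) = E * (a * (x * b + y * d) - b * (x * a + y * c))"
    by (simp add: algebra_simps)
  then show "y = E * (a * q - b * p)"
    using assms by simp
qed

lemma trace_inverse_mult_deriv_2:
  fixes d :: "'a::comm_ring_1 \<Rightarrow> 'a" and R Rinv :: "'a^2^2"
  assumes additive: "\<And>f g. d (f + g) = d f + d g"
    and leibniz: "\<And>f g. d (f * g) = f * d g + d f * g"
    and inverse: "Rinv ** R = mat 1"
  shows "trace (Rinv ** (\<chi> i j. d (R $ i $ j))) = det Rinv * d (det R)"
proof -
  define E where "E = det Rinv"
  have det_R: "det R = R$1$1 * R$2$2 - R$1$2 * R$2$1"
    by (simp add: det_2)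
  have ED: "E * (R$1$1 * R$2$2 - R$1$2 * R$2$1) = 1"
    unfolding E_def det_R[symmetric] using inverse by (metis det_mul det_I)
  have entry: "(Rinv ** R) $ i $ j = (if i = j then 1 else 0)" for i j
    using inverse by (simp add: mat_def)
  have "Rinv$1$1 * R$1$1 + Rinv$1$2 * R$2$1 = 1" "Rinv$1$1 * R$1$2 + Rinv$1$2 * R$2$2 = 0"
    using entry[of 1 1] entry[of 1 2] by (simp_all add: matrix_matrix_mult_2_nth)
  note row1 = cramer_row_2[OF this ED]
  have "Rinv$2$1 * R$1$1 + Rinv$2$2 * R$2$1 = 0" "Rinv$2$1 * R$1$2 + Rinv$2$2 * R$2$2 = 1"
    using entry[of 2 1] entry[of 2 2] by (simp_all add: matrix_matrix_mult_2_nth)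
  note row2 = cramer_row_2[OF this ED]
  show ?thesis
    unfolding trace_2 matrix_matrix_mult_2_nth E_def[symmetric] det_R
    by (simp add: row1 row2 derivation_diff[OF additive] leibniz algebra_simps)
qed

theorem lemma4p12:
  fixes A R Rinv :: "LS^2^2"
  assumes R_inv: "Rinv ** R = mat 1" "R ** Rinv = mat 1"
    and A_diag: "\<forall>i j. i \<noteq> j \<longrightarrow> A $ i $ j = 0"
    and R0_pow: "\<forall>i j. is_pow_series (at_lambda0 R $ i $ j)"
    and R0_det: "det (at_lambda0 R) \<noteq> 0" "fls_subdegree (det (at_lambda0 R)) = 1"
    and At_reg: "\<forall>i j. in_Czl ((Rinv ** A ** R + mat fps_X ** Rinv ** dz_mat R) $ i $ j)"
  shows "res_z (trace A) = - fps_X"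
proof -
  define E where "E = det Rinv"
  have "E * det R = 1"
    unfolding E_def using R_inv(1) by (metis det_mul det_I)
  moreover have "det R $ 0 = det (at_lambda0 R)"
    by (simp add: det_2 at_lambda0_def)
  ultimately have log_deriv: "res_z (E * dz (det R)) = 1"
    using res_z_log_deriv R0_det(2) by simp
  have jacobi: "trace (Rinv ** dz_mat R) = E * dz (det R)"
    unfolding dz_mat_def E_def
    by (rule trace_inverse_mult_deriv_2[OF dz_add dz_mult R_inv(1)])
  have "trace (mat fps_X ** Rinv ** dz_mat R) = fps_X * (E * dz (det R))"
    by (simp only: matrix_mul_assoc[symmetric] trace_mat_mult jacobi)
  moreover have "in_Czl (trace (Rinv ** A ** R + mat fps_X ** Rinv ** dz_mat R))"
    unfolding trace_2 using At_reg in_Czl_add by blast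
  then have "res_z (trace (Rinv ** A ** R + mat fps_X ** Rinv ** dz_mat R)) = 0"
    by (rule res_z_eq_0_if_in_Czl)
  ultimately have "res_z (trace A) + fps_X * res_z (E * dz (det R)) = 0"
    by (simp only: trace_add trace_conjugate[OF R_inv(2)] res_z_add res_z_fps_X_mult)
  with log_deriv show ?thesis
    by (simp add: eq_neg_iff_add_eq_0)
qed

end
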